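(* Let $f_{N_2N_1}(x)=\left(\frac{\sqrt x+1}{2}\right)\sqrt{\frac{x+1}{2}}-\left(\frac{\sqrt x+1}{2}\right)^2$ for $x\in(0,\infty)$, let $f_{N_2N_1}^*(u)=u\,f_{N_2N_1}\!\left(\frac{1-u}{u}\right)$ for $u\in(0,1)$, extended by continuity to $[0,1]$ (explicitly $f_{N_2N_1}^*(u)=\frac{\sqrt2}{4}\left(\sqrt u+\sqrt{1-u}\right)-\frac14\left(1+2\sqrt{u(1-u)}\right)$), and define $\overline M_{N_2N_1}(C_1,C_2)=E_X\{f_{N_2N_1}^*(P(C_2\mid x))\}$. Then $$P_e\le \frac12\left[1-\frac{4}{2\sqrt2-1}\,\overline M_{N_2N_1}(C_1,C_2)\right].$$
   Context: Two-class decision problem: classes $C_1,C_2$, an observation $x$ in a space $\mathrm X$ with density $p(x)$, and a posteriori probabilities $P(C_1\mid x),P(C_2\mid x)\ge0$ with $P(C_1\mid x)+P(C_2\mid x)=1$. $E_X\{g(x)\}=\int_{\mathrm X} g(x)p(x)\,dx$. $P_e=E_X\{\min(P(C_1\mid x),P(C_2\mid x))\}$ is the Bayesian probability of error. *)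

theory Defs
  imports "HOL-Probability.Probability"
begin

definition f_N2N1 :: "real \<Rightarrow> real" where
  "f_N2N1 x = ((sqrt x + 1) / 2) * sqrt ((x + 1) / 2) - ((sqrt x + 1) / 2)^2"

text \<open>u * f((1-u)/u) on (0,1), extended by continuity to [0,1]
  (the limit at both endpoints is (sqrt 2 - 1)/4).\<close>
definition fstar_N2N1 :: "real \<Rightarrow> real" where
  "fstar_N2N1 u = (if 0 < u \<and> u < 1 then u * f_N2N1 ((1 - u) / u) else (sqrt 2 - 1) / 4)"

definition E_X :: "('a::euclidean_space \<Rightarrow> real) \<Rightarrow> ('a \<Rightarrow> real) \<Rightarrow> real" where
  "E_X p g = (\<integral>x. g x * p x \<partial>lborel)"

definition Pe :: "('a::euclidean_space \<Rightarrow> real) \<Rightarrow> ('a \<Rightarrow> real) \<Rightarrow> ('a \<Rightarrow> real) \<Rightarrow> real" where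
  "Pe p P1 P2 = E_X p (\<lambda>x. min (P1 x) (P2 x))"

definition Mbar_N2N1 :: "('a::euclidean_space \<Rightarrow> real) \<Rightarrow> ('a \<Rightarrow> real) \<Rightarrow> ('a \<Rightarrow> real) \<Rightarrow> real" where
  "Mbar_N2N1 p P1 P2 = E_X p (\<lambda>x. fstar_N2N1 (P2 x))"

end

theory Submission
  imports Defs
begin

text \<open>Write \<open>u = a\<^sup>2\<close>, \<open>1 - u = b\<^sup>2\<close> with \<open>a, b \<ge> 0\<close>, and \<open>s = a + b\<close>. Then
  \<open>f\<^sup>*(u) = s (\<surd>2 - s) / 4\<close> and \<open>1 - 2 min(u, 1 - u) = \<bar>b - a\<bar> s\<close>, so the bound on \<open>P\<^sub>e\<close>
  holds pointwise once \<open>\<surd>2 - s \<le> (2\<surd>2 - 1) \<bar>b - a\<bar>\<close>. As \<open>s\<^sup>2 + (b - a)\<^sup>2 = 2\<close>, squaring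
  and cancelling \<open>\<surd>2 - s \<ge> 0\<close> reduces this to \<open>\<surd>2 - s \<le> (\<surd>2 + s)(2\<surd>2 - 1)\<^sup>2\<close>.
  Integrating the pointwise bound against the density \<open>p\<close> gives the theorem.\<close>

lemma sqrt2_minus_sum_le_abs_diff:
  fixes a b :: real
  assumes "0 \<le> a" "0 \<le> b" "a\<^sup>2 + b\<^sup>2 = 1"
  shows "sqrt 2 - (a + b) \<le> \<bar>b - a\<bar> * (2 * sqrt 2 - 1)"
proof -
  define r s d where "r = sqrt 2" and "s = a + b" and "d = \<bar>b - a\<bar>"
  have r: "r\<^sup>2 = 2" "1 \<le> r" by (simp_all add: r_def)
  have sd: "d\<^sup>2 = (r - s) * (r + s)"
    using assms(3) r by (simp add: s_def d_def power2_eq_square algebra_simps)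
  have "0 \<le> s" "0 \<le> d" using assms by (simp_all add: s_def d_def)
  have "d\<^sup>2 = r\<^sup>2 - s\<^sup>2" unfolding sd by (simp add: power2_eq_square algebra_simps)
  then have "s\<^sup>2 \<le> r\<^sup>2" using zero_le_power2[of d] by linarith
  then have "s \<le> r" using \<open>1 \<le> r\<close> by (simp add: power2_le_iff_abs_le)
  have "1 \<le> (2 * r - 1)\<^sup>2" using r by (simp add: one_le_power)
  have "(r - s)\<^sup>2 \<le> (r - s) * (r + s)"
    using \<open>s \<le> r\<close> \<open>0 \<le> s\<close> by (simp add: power2_eq_square mult_left_mono)
  also have "\<dots> \<le> (r - s) * (r + s) * (2 * r - 1)\<^sup>2"
  proof -
    have "0 \<le> (r - s) * (r + s)" using \<open>s \<le> r\<close> \<open>0 \<le> s\<close> by simp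
    from mult_left_mono[OF \<open>1 \<le> (2 * r - 1)\<^sup>2\<close> this] show ?thesis by (simp only: mult_1_right)
  qed
  also have "\<dots> = (d * (2 * r - 1))\<^sup>2" by (simp add: sd power_mult_distrib)
  finally have "r - s \<le> d * (2 * r - 1)"
    by (rule power2_le_imp_le) (use \<open>0 \<le> d\<close> r in simp)
  then show ?thesis by (simp add: r_def s_def d_def)
qed

lemma fstar_N2N1_sqrt_param:
  fixes a b :: real
  assumes "0 \<le> a" "0 \<le> b" "a\<^sup>2 + b\<^sup>2 = 1"
  shows "fstar_N2N1 (a\<^sup>2) = (a + b) * (sqrt 2 - (a + b)) / 4"
proof (cases "0 < a\<^sup>2 \<and> a\<^sup>2 < 1")
  case True
  then have "0 < a" using assms(1) by auto
  have "(1 - a\<^sup>2) / a\<^sup>2 = (b / a)\<^sup>2" using assms(3) by (simp add: power_divide)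
  then have ratio: "sqrt ((1 - a\<^sup>2) / a\<^sup>2) = b / a" using assms by simp
  have "((1 - a\<^sup>2) / a\<^sup>2 + 1) / 2 = (1 / (sqrt 2 * a))\<^sup>2"
    using \<open>0 < a\<close> by (simp add: field_simps power_mult_distrib)
  then have mean: "sqrt (((1 - a\<^sup>2) / a\<^sup>2 + 1) / 2) = 1 / (sqrt 2 * a)"
    using \<open>0 < a\<close> by simp
  have "fstar_N2N1 (a\<^sup>2) = a\<^sup>2 * ((b / a + 1) / 2 * (1 / (sqrt 2 * a)) - ((b / a + 1) / 2)\<^sup>2)"
    using True by (simp add: fstar_N2N1_def f_N2N1_def ratio mean)
  also have "\<dots> = (a + b) / (2 * sqrt 2) - (a + b)\<^sup>2 / 4"
    using \<open>0 < a\<close> by (simp add: field_simps power2_eq_square)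
  also have "\<dots> = sqrt 2 / 4 * (a + b) - (a + b)\<^sup>2 / 4"
  proof -
    have "(a + b) / (2 * sqrt 2) = sqrt 2 / 4 * (a + b)"
      by (simp add: field_simps mult.assoc[symmetric])
    then show ?thesis by simp
  qed
  also have "\<dots> = (a + b) * (sqrt 2 - (a + b)) / 4"
    by (simp add: field_simps power2_eq_square)
  finally show ?thesis .
next
  case False
  then have "a\<^sup>2 = 0 \<and> b\<^sup>2 = 1 \<or> a\<^sup>2 = 1 \<and> b\<^sup>2 = 0"
    using assms(3) zero_le_power2[of a] zero_le_power2[of b] by linarith
  then have "a = 0 \<and> b = 1 \<or> a = 1 \<and> b = 0"
    using assms(1,2) by (auto simp: power2_eq_1_iff)
  then show ?thesis by (auto simp: fstar_N2N1_def diff_divide_distrib)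
qed

lemma min_le_half_minus_fstar_N2N1:
  assumes "0 \<le> u" "u \<le> 1"
  shows "min (1 - u) u \<le> 1/2 - 2 / (2 * sqrt 2 - 1) * fstar_N2N1 u"
proof -
  define a b where "a = sqrt u" and "b = sqrt (1 - u)"
  have ab: "0 \<le> a" "0 \<le> b" "a\<^sup>2 = u" "b\<^sup>2 = 1 - u" using assms by (simp_all add: a_def b_def)
  then have circle: "a\<^sup>2 + b\<^sup>2 = 1" by simp
  define s c where "s = a + b" and "c = 2 * sqrt 2 - 1"
  have "1 \<le> sqrt 2" by simp
  then have "0 < c" unfolding c_def by linarith
  have "0 \<le> s" using ab by (simp add: s_def)
  have "\<bar>b - a\<bar> * s = \<bar>(b - a) * (a + b)\<bar>" using \<open>0 \<le> s\<close> by (simp add: s_def abs_mult)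
  also have "\<dots> = \<bar>1 - 2 * u\<bar>" using ab by (simp add: power2_eq_square algebra_simps)
  finally have min: "min (1 - u) u = 1/2 - \<bar>b - a\<bar> * s / 2"
    by (simp add: min_def abs_if field_simps)
  have fstar: "fstar_N2N1 u = s * (sqrt 2 - s) / 4"
    using fstar_N2N1_sqrt_param[OF ab(1,2) circle] unfolding ab(3) s_def .
  have "2 / c * fstar_N2N1 u = s * (sqrt 2 - s) / (2 * c)"
    unfolding fstar using \<open>0 < c\<close> by (simp add: field_simps)
  also have "\<dots> \<le> s * (\<bar>b - a\<bar> * c) / (2 * c)"
    using sqrt2_minus_sum_le_abs_diff[OF ab(1,2) circle] \<open>0 \<le> s\<close> \<open>0 < c\<close>
    unfolding s_def c_def by (intro divide_right_mono mult_left_mono) simp_all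
  also have "\<dots> = \<bar>b - a\<bar> * s / 2" using \<open>0 < c\<close> by simp
  finally show ?thesis using min by (simp add: c_def)
qed

lemma abs_fstar_N2N1_le_1:
  assumes "0 \<le> u" "u \<le> 1"
  shows "\<bar>fstar_N2N1 u\<bar> \<le> 1"
proof -
  define a b where "a = sqrt u" and "b = sqrt (1 - u)"
  have ab: "0 \<le> a" "a \<le> 1" "0 \<le> b" "b \<le> 1" "a\<^sup>2 + b\<^sup>2 = 1" using assms by (simp_all add: a_def b_def)
  have "0 \<le> sqrt 2" "sqrt 2 \<le> 2" using real_sqrt_le_iff[of 2 4] by simp_all
  then have "\<bar>sqrt 2 - (a + b)\<bar> \<le> 2" using ab by linarith
  then have "\<bar>a + b\<bar> * \<bar>sqrt 2 - (a + b)\<bar> \<le> 2 * 2"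
    using ab by (intro mult_mono) auto
  moreover have "fstar_N2N1 u = (a + b) * (sqrt 2 - (a + b)) / 4"
    using fstar_N2N1_sqrt_param[OF ab(1,3,5)] assms by (simp add: a_def)
  ultimately show ?thesis by (simp only: abs_mult abs_divide)
qed

lemma borel_measurable_fstar_N2N1 [measurable]: "fstar_N2N1 \<in> borel_measurable borel"
  unfolding fstar_N2N1_def[abs_def] f_N2N1_def by measurable

lemma integrable_bounded_mult_density:
  fixes g p :: "'a::euclidean_space \<Rightarrow> real"
  assumes "integrable lborel p" "g \<in> borel_measurable lborel" "\<And>x. \<bar>g x\<bar> \<le> B"
  shows "integrable lborel (\<lambda>x. g x * p x)"
proof (rule Bochner_Integration.integrable_bound)
  show "integrable lborel (\<lambda>x. B * p x)" using assms(1) by simp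
  show "(\<lambda>x. g x * p x) \<in> borel_measurable lborel" using assms(1,2) by measurable
  show "AE x in lborel. norm (g x * p x) \<le> norm (B * p x)"
    using assms(3) order_trans[OF abs_ge_zero assms(3)]
    by (auto simp: abs_mult intro!: mult_right_mono)
qed

lemma E_X_le_affine:
  fixes p g h :: "'a::euclidean_space \<Rightarrow> real"
  assumes p_nonneg: "\<And>x. 0 \<le> p x" and p_int: "integrable lborel p"
    and p_one: "(\<integral>x. p x \<partial>lborel) = 1"
    and g: "g \<in> borel_measurable lborel" "\<And>x. \<bar>g x\<bar> \<le> B"
    and h: "h \<in> borel_measurable lborel" "\<And>x. \<bar>h x\<bar> \<le> C"
    and bound: "\<And>x. g x \<le> \<alpha> + \<beta> * h x"
  shows "E_X p g \<le> \<alpha> + \<beta> * E_X p h"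
proof -
  have ig: "integrable lborel (\<lambda>x. g x * p x)" and ih: "integrable lborel (\<lambda>x. h x * p x)"
    using integrable_bounded_mult_density p_int g h by blast+
  have "E_X p g \<le> (\<integral>x. \<alpha> * p x + \<beta> * (h x * p x) \<partial>lborel)"
    unfolding E_X_def
  proof (rule integral_mono)
    fix x show "g x * p x \<le> \<alpha> * p x + \<beta> * (h x * p x)"
      using mult_right_mono[OF bound p_nonneg, of x] by (simp add: algebra_simps)
  qed (use ig ih p_int in auto)
  also have "\<dots> = \<alpha> + \<beta> * E_X p h"
    using ih p_int p_one by (simp add: E_X_def)
  finally show ?thesis .
qed

theorem mainTheorem10:
  fixes p P1 P2 :: "'a::euclidean_space \<Rightarrow> real"
  assumes p_meas: "p \<in> borel_measurable lborel"
    and p_nonneg: "\<And>x. p x \<ge> 0"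
    and p_int: "integrable lborel p"
    and p_one: "(\<integral>x. p x \<partial>lborel) = 1"
    and P1_meas: "P1 \<in> borel_measurable lborel"
    and P2_meas: "P2 \<in> borel_measurable lborel"
    and P_nonneg: "\<And>x. P1 x \<ge> 0 \<and> P2 x \<ge> 0"
    and P_sum: "\<And>x. P1 x + P2 x = 1"
  shows "Pe p P1 P2 \<le> 1/2 * (1 - 4 / (2 * sqrt 2 - 1) * Mbar_N2N1 p P1 P2)"
proof -
  have P2: "0 \<le> P2 x" "P2 x \<le> 1" for x using P_nonneg[of x] P_sum[of x] by auto
  have P1: "P1 x = 1 - P2 x" for x using P_sum[of x] by simp
  have "Pe p P1 P2 \<le> 1/2 + (- 2 / (2 * sqrt 2 - 1)) * Mbar_N2N1 p P1 P2"
    unfolding Pe_def Mbar_N2N1_def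
  proof (rule E_X_le_affine[where B = 1 and C = 1])
    show "\<bar>min (P1 x) (P2 x)\<bar> \<le> 1" for x using P2[of x] by (simp add: P1)
    show "\<bar>fstar_N2N1 (P2 x)\<bar> \<le> 1" for x using abs_fstar_N2N1_le_1 P2 by blast
    show "min (P1 x) (P2 x) \<le> 1/2 + - 2 / (2 * sqrt 2 - 1) * fstar_N2N1 (P2 x)" for x
      using min_le_half_minus_fstar_N2N1[OF P2] by (simp add: P1)
  qed (use p_nonneg p_int p_one P1_meas P2_meas in auto)
  then show ?thesis by (simp add: algebra_simps)
qed

end
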